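(* Let $d\ge2$, let $\mu\ge0$ be a finite measure with compact support in $\mathbb{R}^d$, let $\lambda>0$, $p\ge1$, and let $\varepsilon_n\to0^+$. Then the functionals $\mathcal{E}_\mu^{\lambda,\varepsilon_n,p}$ $\Gamma$-converge, as $n\to\infty$, to $E_\mu^{\lambda,p}$ with respect to the topology on $\mathcal{C}$ induced by the metric $m$; that is: (a) for every sequence $\varphi_n\to\varphi$ in $(\mathcal{C},m)$, $\liminf_n\mathcal{E}_\mu^{\lambda,\varepsilon_n,p}(\varphi_n)\ge E_\mu^{\lambda,p}(\varphi)$; (b) for every $\varphi\in\mathcal{C}$ there is a sequence $\varphi_n\to\varphi$ in $(\mathcal{C},m)$ with $\limsup_n\mathcal{E}_\mu^{\lambda,\varepsilon_n,p}(\varphi_n)\le E_\mu^{\lambda,p}(\varphi)$.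
   Context: $\mathcal{C}$ denotes the set of curves $\varphi:[0,a]\to\mathbb{R}^d$, $a\ge 0$, that are Lipschitz with $|\varphi'|=1$ a.e.; the length $L(\varphi)$ is its total variation, which equals $a$. $\Gamma_\varphi$ is the image of $\varphi$, $d(x,\Gamma)=\inf_{y\in\Gamma}|x-y|$, and $\kappa_\varphi=\varphi''$. The functional is $\mathcal{E}_\mu^{\lambda,\varepsilon,p}(\varphi)=\int d(x,\Gamma_\varphi)^p\,d\mu+\lambda L(\varphi)+\varepsilon\int_0^{L(\varphi)}|\kappa_\varphi|^2dt$ if $\varphi\in H^2([0,L(\varphi)];\mathbb{R}^d)\cap\mathcal{C}$ and $+\infty$ otherwise (a single-point curve has curvature term $0$). Also $E_\mu^{\lambda,p}(\psi):=\int_{\mathbb{R}^d}d(x,\Gamma_\psi)^p\,d\mu+\lambda L(\psi)$ for $\psi\in\mathcal{C}$. For $\varphi\in\mathcal{C}$, $\Phi(\varphi)(t)=\varphi(tL(\varphi))$, $t\in[0,1]$, and the metric on $\mathcal{C}$ is $m(\varphi,\psi)=\min\{\|\Phi(\varphi)-\Phi(\psi)\|_{L^\infty},\|\Phi(\varphi(L(\varphi)-\cdot))-\Phi(\psi)\|_{L^\infty}\}+|L(\varphi)-L(\psi)|$. *)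

theory Defs
  imports "HOL-Analysis.Analysis"
begin

text \<open>A curve is represented by a pair (a, f): its parameter interval [0,a] and the map f;
only the values of f on [0,a] are relevant.\<close>

type_synonym 'a curve = "real \<times> (real \<Rightarrow> 'a)"

definition curve_len :: "'a curve \<Rightarrow> real" where
  "curve_len c = fst c"

definition curve_image :: "'a::real_normed_vector curve \<Rightarrow> 'a set" where
  "curve_image c = snd c ` {0..fst c}"

definition curves_C :: "'a::euclidean_space curve set" where
  "curves_C = {(a, f). a \<ge> 0 \<and> (\<exists>M. M-lipschitz_on {0..a} f) \<and>
      (AE t in lborel. t \<in> {0<..<a} \<longrightarrow>
         (\<exists>v. (f has_vector_derivative v) (at t) \<and> norm v = 1))}"

text \<open>kappa is a (weak) second derivative of the curve in L^2: f is C^1 on [0,a] with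
derivative v, and v is the integral of kappa, kappa square integrable.\<close>
definition is_curvature :: "'a::euclidean_space curve \<Rightarrow> (real \<Rightarrow> 'a) \<Rightarrow> bool" where
  "is_curvature c \<kappa> \<longleftrightarrow>
     set_integrable lborel {0..fst c} \<kappa> \<and>
     set_integrable lborel {0..fst c} (\<lambda>t. (norm (\<kappa> t))\<^sup>2) \<and>
     (\<exists>v. \<forall>t\<in>{0..fst c}. (snd c has_vector_derivative v t) (at t within {0..fst c}) \<and>
            v t = v 0 + (LINT s:{0..t}|lborel. \<kappa> s))"

definition in_H2 :: "'a::euclidean_space curve \<Rightarrow> bool" where
  "in_H2 c \<longleftrightarrow> (\<exists>\<kappa>. is_curvature c \<kappa>)"

definition curvature_energy :: "'a::euclidean_space curve \<Rightarrow> real" where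
  "curvature_energy c = (LINT t:{0..fst c}|lborel. (norm ((SOME \<kappa>. is_curvature c \<kappa>) t))\<^sup>2)"

definition E_fun :: "'a::euclidean_space measure \<Rightarrow> real \<Rightarrow> real \<Rightarrow> 'a curve \<Rightarrow> ennreal" where
  "E_fun \<mu> lam p c = (\<integral>\<^sup>+ x. ennreal (infdist x (curve_image c) powr p) \<partial>\<mu>) + ennreal (lam * curve_len c)"

definition Eps_fun :: "'a::euclidean_space measure \<Rightarrow> real \<Rightarrow> real \<Rightarrow> real \<Rightarrow> 'a curve \<Rightarrow> ennreal" where
  "Eps_fun \<mu> lam \<epsilon> p c = (if c \<in> curves_C \<and> in_H2 c
     then (\<integral>\<^sup>+ x. ennreal (infdist x (curve_image c) powr p) \<partial>\<mu>) + ennreal (lam * curve_len c)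
          + ennreal (\<epsilon> * curvature_energy c)
     else top)"

definition curve_dist :: "'a::real_normed_vector curve \<Rightarrow> 'a curve \<Rightarrow> real" where
  "curve_dist c1 c2 =
     min (Sup ((\<lambda>t. norm (snd c1 (t * fst c1) - snd c2 (t * fst c2))) ` {0..1}))
         (Sup ((\<lambda>t. norm (snd c1 (fst c1 - t * fst c1) - snd c2 (t * fst c2))) ` {0..1}))
     + \<bar>fst c1 - fst c2\<bar>"

end

theory Submission
  imports Defs
begin

text \<open>Lower bound: the curvature term is nonnegative, the map from a curve to the distance function
  of its image is 1-Lipschitz from the metric m into sup-norm, and lengths converge, so Fatou's lemma
  gives the liminf inequality.

  Upper bound: a unit-speed Lipschitz curve has a tangent u with |u| = 1 a.e. that integrates back
  to the curve. Approximating u in L^1 by a smooth field that never vanishes (possible because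
  d \<ge> 2) and integrating its normalisation gives H^2 unit-speed curves of the same length that
  converge uniformly. Letting the approximation index grow slowly enough that eps_n times the
  curvature energy tends to 0, reverse Fatou on the compact support of mu gives the limsup
  inequality.\<close>

section \<open>The fundamental theorem of calculus for Lipschitz functions\<close>

lemma tagged_division_content_sum_le_measure:
  fixes p :: "(real \<times> real set) set"
  assumes p: "p tagged_division_of {a..b}" and q: "q \<subseteq> p"
    and G: "G \<in> lmeasurable" and sub: "\<And>x K. (x,K) \<in> q \<Longrightarrow> K \<subseteq> G"
  shows "(\<Sum>(x,K)\<in>q. measure lborel K) \<le> measure lebesgue G"
proof -
  have fin: "finite q" using p q tagged_division_of_finite finite_subset by blast
  have cbox: "\<exists>u v. snd xk = cbox u v" if "xk \<in> q" for xk
  proof -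
    have "(fst xk, snd xk) \<in> p" using that q by auto
    then show ?thesis using tagged_division_ofD(4)[OF p] by blast
  qed
  have "(\<Sum>(x,K)\<in>q. measure lborel K) = (\<Sum>xk\<in>q. measure lebesgue (snd xk))"
  proof (rule sum.cong[OF refl])
    fix xk assume "xk \<in> q"
    then obtain u v where "snd xk = cbox u v" using cbox by blast
    then show "(case xk of (x, K) \<Rightarrow> measure lborel K) = measure lebesgue (snd xk)"
      by (simp add: split_def)
  qed
  also have "\<dots> = measure lebesgue (\<Union>(snd ` q))"
  proof (rule measure_negligible_finite_Union_image[symmetric, OF fin])
    show "snd xk \<in> lmeasurable" if "xk \<in> q" for xk
      using cbox[OF that] by auto
    show "pairwise (\<lambda>x y. negligible (snd x \<inter> snd y)) q"
    proof (rule pairwiseI)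
      fix xk yl assume xk: "xk \<in> q" and yl: "yl \<in> q" and ne: "xk \<noteq> yl"
      obtain u v where K: "snd xk = cbox u v" using cbox xk by blast
      obtain u' v' where L: "snd yl = cbox u' v'" using cbox yl by blast
      have "interior (snd xk) \<inter> interior (snd yl) = {}"
        using tagged_division_ofD(5)[OF p, of "fst xk" "snd xk" "fst yl" "snd yl"] xk yl ne q
        by (auto simp: prod_eq_iff)
      then have "snd xk \<inter> snd yl \<subseteq> (cbox u v - box u v) \<union> (cbox u' v' - box u' v')"
        using K L by auto
      moreover have "negligible ((cbox u v - box u v) \<union> (cbox u' v' - box u' v'))"
        using negligible_frontier_interval negligible_Un by blast
      ultimately show "negligible (snd xk \<inter> snd yl)"
        using negligible_subset by blast
    qed
  qed
  also have "\<dots> \<le> measure lebesgue G"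
  proof (rule measure_mono_fmeasurable[OF _ _ G])
    show "\<Union>(snd ` q) \<subseteq> G" using sub by fastforce
    have "snd xk \<in> sets lebesgue" if "xk \<in> q" for xk
      using cbox[OF that] by auto
    then show "\<Union>(snd ` q) \<in> sets lebesgue" using fin by auto
  qed
  finally show ?thesis .
qed

lemma norm_chord_diff_le_lipschitz:
  fixes f :: "real \<Rightarrow> 'a::real_normed_vector"
  assumes "M-lipschitz_on S f" "u \<in> S" "v \<in> S" "u \<le> v" "norm y \<le> B"
  shows "norm ((v - u) *\<^sub>R y - (f v - f u)) \<le> (B + M) * (v - u)"
proof -
  have "norm ((v - u) *\<^sub>R y - (f v - f u)) \<le> (v - u) * norm y + norm (f v - f u)"
    using norm_triangle_ineq4[of "(v - u) *\<^sub>R y"] assms(4) by simp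
  also have "\<dots> \<le> (v - u) * B + M * (v - u)"
    using lipschitz_onD[OF assms(1,3,2)] assms(4,5)
    by (intro add_mono mult_left_mono) (auto simp: dist_norm)
  finally show ?thesis by (simp add: algebra_simps)
qed

lemma norm_chord_diff_le_linearization:
  fixes f :: "real \<Rightarrow> 'a::real_normed_vector"
  assumes x: "x \<in> {u..v}"
    and lin: "\<And>y. y \<in> {u..v} \<Longrightarrow> norm (f y - f x - (y - x) *\<^sub>R y') \<le> c * \<bar>y - x\<bar>"
  shows "norm ((v - u) *\<^sub>R y' - (f v - f u)) \<le> c * (v - u)"
proof -
  have "norm ((v - u) *\<^sub>R y' - (f v - f u))
      = norm ((f u - f x - (u - x) *\<^sub>R y') - (f v - f x - (v - x) *\<^sub>R y'))"
    by (simp add: algebra_simps)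
  also have "\<dots> \<le> c * \<bar>u - x\<bar> + c * \<bar>v - x\<bar>"
    using norm_triangle_ineq4 lin[of u] lin[of v] x by (smt (verit) atLeastAtMost_iff)
  also have "\<dots> = c * (v - u)" using x by (simp add: algebra_simps)
  finally show ?thesis .
qed

lemma norm_chord_diff_le_on_tag:
  fixes f :: "real \<Rightarrow> 'a::real_normed_vector"
  assumes lip: "M-lipschitz_on {a..b} f" and bnd: "norm y' \<le> B"
    and x: "x \<in> {u..v}" and uv: "{u..v} \<subseteq> {a..b}" and c: "c \<ge> 0"
    and lin: "x \<notin> S \<Longrightarrow> \<forall>y\<in>{u..v}. norm (f y - f x - (y - x) *\<^sub>R y') \<le> c * \<bar>y - x\<bar>"
  shows "norm ((v - u) *\<^sub>R y' - (f v - f u)) \<le> (B + M) * (if x \<in> S then v - u else 0) + c * (v - u)"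
proof (cases "x \<in> S")
  case True
  have "norm ((v - u) *\<^sub>R y' - (f v - f u)) \<le> (B + M) * (v - u)"
    using norm_chord_diff_le_lipschitz[OF lip _ _ _ bnd, of u v] uv x by auto
  moreover have "0 \<le> c * (v - u)" using x c by simp
  ultimately show ?thesis using True by simp
next
  case False
  then show ?thesis using norm_chord_diff_le_linearization[OF x, of f y' c] lin by simp
qed

lemma tagged_division_riemann_sum_diff_le:
  fixes f f' :: "real \<Rightarrow> 'a::real_normed_vector"
  assumes ptag: "p tagged_division_of {a..b}" and ab: "a \<le> b"
    and tag: "\<And>x K. (x,K) \<in> p \<Longrightarrow> norm (measure lborel K *\<^sub>R f' x - (f (Sup K) - f (Inf K)))
      \<le> c * (if x \<in> S then measure lborel K else 0) + e * measure lborel K"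
  shows "norm ((\<Sum>(x,K)\<in>p. measure lborel K *\<^sub>R f' x) - (f b - f a))
    \<le> c * (\<Sum>(x,K)\<in>{(x,K)\<in>p. x \<in> S}. measure lborel K) + e * (b - a)"
proof -
  have "f b - f a = (\<Sum>(x,K)\<in>p. f (Sup K) - f (Inf K))"
    using additive_tagged_division_1[of a b p f] ab ptag by simp
  then have "norm ((\<Sum>(x,K)\<in>p. measure lborel K *\<^sub>R f' x) - (f b - f a))
      = norm (\<Sum>(x,K)\<in>p. measure lborel K *\<^sub>R f' x - (f (Sup K) - f (Inf K)))"
    by (simp add: split_def sum_subtractf)
  also have "\<dots> \<le> (\<Sum>(x,K)\<in>p. c * (if x \<in> S then measure lborel K else 0) + e * measure lborel K)"
    by (rule sum_norm_le) (use tag in auto)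
  also have "\<dots> = c * (\<Sum>(x,K)\<in>p. (if x \<in> S then measure lborel K else 0))
      + e * (\<Sum>(x,K)\<in>p. measure lborel K)"
    by (simp add: split_def sum.distrib sum_distrib_left)
  also have "(\<Sum>(x,K)\<in>p. (if x \<in> S then measure lborel K else 0)) = (\<Sum>(x,K)\<in>{(x,K)\<in>p. x \<in> S}. measure lborel K)"
    using tagged_division_of_finite[OF ptag]
    by (simp add: split_def sum.inter_filter[symmetric] case_prod_beta)
  also have "(\<Sum>(x,K)\<in>p. measure lborel K) = b - a"
    using additive_content_tagged_division[of p a b] ptag ab by simp
  finally show ?thesis .
qed

lemma negligible_open_superset_small_measure:
  assumes negE: "negligible E" and \<eta>: "\<eta> > 0"
  obtains G where "open G" "E \<subseteq> G" "G \<in> lmeasurable" "measure lebesgue G < \<eta>"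
proof -
  obtain G where G: "open G" "E \<subseteq> G" "G - E \<in> lmeasurable" "emeasure lebesgue (G - E) < ennreal \<eta>"
    using sets_lebesgue_outer_open[OF negligible_imp_sets[OF negE] \<eta>] by blast
  have "G = (G - E) \<union> E" using G(2) by auto
  then have Gm: "G \<in> lmeasurable" using G(3) negE negligible_imp_measurable fmeasurable.Un by metis
  have "measure lebesgue G = measure lebesgue (G - E)"
    by (rule measure_negligible_symdiff[OF G(3)]) (use negE in \<open>auto intro: negligible_subset\<close>)
  with G(3,4) \<eta> have "measure lebesgue G < \<eta>"
    by (simp add: emeasure_eq_measure2 ennreal_less_iff)
  with G(1,2) Gm show ?thesis using that by blast
qed

lemma has_vector_derivative_uniform_linearization:
  fixes f :: "real \<Rightarrow> 'a::real_normed_vector"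
  assumes der: "\<And>x. x \<in> S \<Longrightarrow> (f has_vector_derivative f' x) (at x)" and c: "c > 0"
  obtains d where "\<And>x. d x > 0"
    "\<And>x y. x \<in> S \<Longrightarrow> norm (y - x) < d x \<Longrightarrow> norm (f y - f x - (y - x) *\<^sub>R f' x) \<le> c * norm (y - x)"
proof -
  have "\<exists>d>0. x \<in> S \<longrightarrow>
         (\<forall>y. norm (y - x) < d \<longrightarrow> norm (f y - f x - (y - x) *\<^sub>R f' x) \<le> c * norm (y - x))" for x
  proof (cases "x \<in> S")
    case True
    then show ?thesis
      using der[OF True, unfolded has_vector_derivative_def has_derivative_at_alt] c by (metis True)
  qed (auto intro: exI[of _ 1])
  then show ?thesis using that by metis
qed

text \<open>Away from an open set of small measure around the exceptional set, the gauge enforces the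
  linearisation estimate; on tags inside that set, the Lipschitz bound controls each term and the
  total content of such tags is at most the measure of the set.\<close>
lemma lipschitz_has_integral_derivative:
  fixes f :: "real \<Rightarrow> 'a::real_normed_vector"
  assumes ab: "a < b" and lip: "M-lipschitz_on {a..b} f" and negE: "negligible E"
    and der: "\<And>x. x \<in> {a<..<b} - E \<Longrightarrow> (f has_vector_derivative f' x) (at x)"
    and bnd: "\<And>x. norm (f' x) \<le> B"
  shows "(f' has_integral (f b - f a)) {a..b}"
  unfolding has_integral_factor_content_real
proof (intro allI impI)
  fix e :: real assume e: "e > 0"
  have "M \<ge> 0" using lip lipschitz_on_nonneg by blast
  moreover have "B \<ge> 0" using bnd[of 0] norm_ge_zero order_trans by blast
  ultimately have BM: "B + M \<ge> 0" by simp
  define E' where "E' = E \<union> {a,b}"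
  define \<eta> where "\<eta> = e * (b - a) / (2 * (B + M + 1))"
  have "negligible E'" using negE unfolding E'_def by auto
  moreover have eta: "\<eta> > 0" using e ab BM unfolding \<eta>_def by auto
  ultimately obtain G where G: "open G" "E' \<subseteq> G" "G \<in> lmeasurable" "measure lebesgue G < \<eta>"
    by (rule negligible_open_superset_small_measure)
  obtain d where d: "\<And>x. 0 < d x" "\<And>x y. \<lbrakk>x \<in> {a<..<b} - E; norm (y - x) < d x\<rbrakk>
      \<Longrightarrow> norm (f y - f x - (y - x) *\<^sub>R f' x) \<le> e/4 * norm (y - x)"
    by (rule has_vector_derivative_uniform_linearization[where S="{a<..<b} - E" and f=f and f'=f' and c="e/4"])
      (use der e in auto)
  have "\<forall>x. \<exists>r>0. x \<in> G \<longrightarrow> ball x r \<subseteq> G"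
    using G(1) open_contains_ball by blast
  then obtain r where r: "\<And>x. r x > 0" "\<And>x. x \<in> G \<Longrightarrow> ball x (r x) \<subseteq> G" by metis
  define \<gamma> where "\<gamma> x = (if x \<in> E' then ball x (r x) else ball x (d x))" for x
  show "\<exists>\<gamma>. gauge \<gamma> \<and> (\<forall>p. p tagged_division_of {a..b} \<and> \<gamma> fine p \<longrightarrow>
      norm ((\<Sum>(x,K)\<in>p. measure lborel K *\<^sub>R f' x) - (f b - f a)) \<le> e * measure lborel {a..b})"
  proof (intro exI[of _ \<gamma>] conjI allI impI)
    show "gauge \<gamma>" unfolding gauge_def \<gamma>_def using r(1) d(1) by auto
  next
    fix p assume "p tagged_division_of {a..b} \<and> \<gamma> fine p"
    then have ptag: "p tagged_division_of {a..b}" and finep: "\<gamma> fine p" by auto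
    have tag: "norm (measure lborel K *\<^sub>R f' x - (f (Sup K) - f (Inf K)))
          \<le> (B + M) * (if x \<in> E' then measure lborel K else 0) + e/4 * measure lborel K"
      if xK: "(x,K) \<in> p" for x K
    proof -
      obtain u v where "K = cbox u v" using ptag xK by (meson tagged_division_ofD(4))
      then have K: "K = {u..v}" by simp
      have x: "x \<in> {u..v}" and uv: "{u..v} \<subseteq> {a..b}"
        using ptag xK unfolding K by (blast dest: tagged_division_ofD(2,3))+
      then have SI: "Sup K = v" "Inf K = u" "measure lborel K = v - u" using K by auto
      have "\<forall>y\<in>{u..v}. norm (f y - f x - (y - x) *\<^sub>R f' x) \<le> e/4 * \<bar>y - x\<bar>" if "x \<notin> E'"
      proof -
        have "x \<in> {a<..<b} - E" using that uv x unfolding E'_def by auto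
        moreover have "K \<subseteq> ball x (d x)" using fineD[OF finep xK] that unfolding \<gamma>_def by simp
        then have "\<bar>y - x\<bar> < d x" if "y \<in> {u..v}" for y
          using that unfolding K by (auto simp: dist_real_def subset_iff)
        ultimately show ?thesis using d(2) by auto
      qed
      then show ?thesis
        unfolding SI using norm_chord_diff_le_on_tag[OF lip bnd x uv, of "e/4" E'] e by simp
    qed
    have "(\<Sum>(x,K)\<in>{(x,K)\<in>p. x \<in> E'}. measure lborel K) \<le> measure lebesgue G"
    proof (rule tagged_division_content_sum_le_measure[OF ptag _ G(3)])
      fix x K assume "(x,K) \<in> {(x,K)\<in>p. x \<in> E'}"
      then have xE: "x \<in> E'" and xK: "(x,K) \<in> p" by auto
      have "K \<subseteq> ball x (r x)" using fineD[OF finep xK] xE unfolding \<gamma>_def by simp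
      with xE show "K \<subseteq> G" using r(2) G(2) by blast
    qed auto
    then have "(B + M) * (\<Sum>(x,K)\<in>{(x,K)\<in>p. x \<in> E'}. measure lborel K) \<le> (B + M + 1) * \<eta>"
      using G(4) BM eta by (intro mult_mono) (auto intro: sum_nonneg)
    also have "\<dots> = e * (b - a) / 2" unfolding \<eta>_def using BM by (simp add: field_simps)
    finally have "norm ((\<Sum>(x,K)\<in>p. measure lborel K *\<^sub>R f' x) - (f b - f a)) \<le> e * (b - a) / 2 + e/4 * (b - a)"
      using tagged_division_riemann_sum_diff_le[OF ptag _ tag] ab by fastforce
    also have "\<dots> \<le> e * measure lborel {a..b}"
      using ab e mult_pos_pos[OF e, of "b - a"] by simp
    finally show "norm ((\<Sum>(x,K)\<in>p. measure lborel K *\<^sub>R f' x) - (f b - f a)) \<le> e * measure lborel {a..b}" .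
  qed
qed

section \<open>Density of continuous functions in L^1\<close>

lemma lebesgue_closed_open_sandwich:
  assumes A: "A \<in> sets lebesgue" and \<eta>: "\<eta> > 0"
  obtains F T where "closed F" "open T" "F \<subseteq> A" "A \<subseteq> T" "emeasure lebesgue (T - F) < ennreal \<eta>"
proof -
  have \<eta>2: "\<eta>/2 > 0" using \<eta> by simp
  obtain T where T: "open T" "A \<subseteq> T" "T - A \<in> lmeasurable" "emeasure lebesgue (T - A) < ennreal (\<eta>/2)"
    using sets_lebesgue_outer_open[OF A \<eta>2] by blast
  obtain F where F: "closed F" "F \<subseteq> A" "A - F \<in> lmeasurable" "emeasure lebesgue (A - F) < ennreal (\<eta>/2)"
    using sets_lebesgue_inner_closed[OF A \<eta>2] by blast
  have "emeasure lebesgue (T - F) \<le> emeasure lebesgue ((T - A) \<union> (A - F))"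
    by (intro emeasure_mono) (use T(3) F(3) in auto)
  also have "\<dots> \<le> emeasure lebesgue (T - A) + emeasure lebesgue (A - F)"
    by (intro emeasure_subadditive) (use T(3) F(3) in auto)
  also have "\<dots> < ennreal (\<eta>/2) + ennreal (\<eta>/2)"
    using T(4) F(4) by (rule add_strict_mono)
  also have "\<dots> = ennreal \<eta>" using \<eta> by (simp flip: ennreal_plus)
  finally show ?thesis using that F(1,2) T(1,2) by blast
qed

text \<open>Urysohn's lemma for the closed set inside and the closed complement of the open set outside.\<close>
lemma continuous_L1_approx_indicator:
  fixes c :: "'b::euclidean_space" and A :: "real set"
  assumes A: "A \<in> sets lebesgue" and e: "e > 0"
  shows "\<exists>g. continuous_on UNIV g \<and>
     (\<integral>\<^sup>+x. ennreal (norm (indicator A x *\<^sub>R c - g x)) \<partial>lebesgue) < ennreal e"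
proof -
  have nc: "norm c + 1 > 0" by (simp add: add_nonneg_pos)
  obtain F T where FT: "closed F" "open T" "F \<subseteq> A" "A \<subseteq> T"
    and mTF: "emeasure lebesgue (T - F) < ennreal (e / (norm c + 1))"
    using lebesgue_closed_open_sandwich[OF A divide_pos_pos[OF e nc]] by blast
  obtain g :: "real \<Rightarrow> 'b" where g: "continuous_on UNIV g" "\<And>x. g x \<in> closed_segment c 0"
    "\<And>x. x \<in> F \<Longrightarrow> g x = c" "\<And>x. x \<in> - T \<Longrightarrow> g x = 0"
  proof -
    have "closed (- T)" "F \<inter> - T = {}" using FT by auto
    then show ?thesis by (rule Urysohn[OF FT(1), of "- T" c 0]) (rule that; assumption)+
  qed
  have pt: "ennreal (norm (indicator A x *\<^sub>R c - g x)) \<le> ennreal (norm c) * indicator (T - F) x" for x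
  proof (cases "x \<in> T - F")
    case True
    obtain t where t: "0 \<le> t" "t \<le> 1" "g x = (1 - t) *\<^sub>R c"
      using g(2)[of x] unfolding closed_segment_def by auto
    have "norm (indicator A x *\<^sub>R c - g x) = \<bar>indicator A x - (1 - t)\<bar> * norm c"
      unfolding t(3) by (simp flip: scaleR_diff_left)
    also have "\<dots> \<le> norm c"
      using t by (intro mult_left_le_one_le) (auto simp: indicator_def)
    finally show ?thesis using True by simp
  next
    case False
    then have "indicator A x *\<^sub>R c - g x = 0"
      using g(3,4) FT(3,4) by (auto simp: indicator_def)
    then show ?thesis by simp
  qed
  have "(\<integral>\<^sup>+x. ennreal (norm (indicator A x *\<^sub>R c - g x)) \<partial>lebesgue)
      \<le> (\<integral>\<^sup>+x. ennreal (norm c) * indicator (T - F) x \<partial>lebesgue)"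
    by (rule nn_integral_mono) (use pt in auto)
  also have "\<dots> = ennreal (norm c) * emeasure lebesgue (T - F)"
    using FT(1,2) by (intro nn_integral_cmult_indicator) (simp add: borel_open borel_closed sets.Diff)
  also have "\<dots> \<le> ennreal (norm c) * ennreal (e / (norm c + 1))"
    using mTF by (intro mult_left_mono) auto
  also have "\<dots> = ennreal (e * (norm c / (norm c + 1)))"
    using e by (simp add: ennreal_mult[symmetric])
  also have "\<dots> < ennreal e"
    using e nc by (intro ennreal_lessI) (auto simp: divide_less_eq)
  finally show ?thesis using g(1) by blast
qed

lemma nn_integral_norm_diff_triangle:
  fixes f g h :: "'a \<Rightarrow> 'b::euclidean_space"
  assumes [measurable]: "f \<in> borel_measurable M" "g \<in> borel_measurable M" "h \<in> borel_measurable M"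
  shows "(\<integral>\<^sup>+x. ennreal (norm (f x - h x)) \<partial>M)
     \<le> (\<integral>\<^sup>+x. ennreal (norm (f x - g x)) \<partial>M) + (\<integral>\<^sup>+x. ennreal (norm (g x - h x)) \<partial>M)"
proof -
  have "(\<integral>\<^sup>+x. ennreal (norm (f x - h x)) \<partial>M)
      \<le> (\<integral>\<^sup>+x. ennreal (norm (f x - g x)) + ennreal (norm (g x - h x)) \<partial>M)"
  proof (intro nn_integral_mono)
    fix x
    have "norm (f x - h x) \<le> norm (f x - g x) + norm (g x - h x)"
      by (rule norm_diff_triangle_le) auto
    then show "ennreal (norm (f x - h x)) \<le> ennreal (norm (f x - g x)) + ennreal (norm (g x - h x))"
      by (simp flip: ennreal_plus)
  qed
  also have "\<dots> = (\<integral>\<^sup>+x. ennreal (norm (f x - g x)) \<partial>M) + (\<integral>\<^sup>+x. ennreal (norm (g x - h x)) \<partial>M)"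
    by (rule nn_integral_add) auto
  finally show ?thesis .
qed

definition L1_continuous_approximable :: "real measure \<Rightarrow> (real \<Rightarrow> 'b::real_normed_vector) \<Rightarrow> bool" where
  "L1_continuous_approximable M h \<longleftrightarrow>
     (\<forall>e>0. \<exists>g. continuous_on UNIV g \<and> (\<integral>\<^sup>+x. ennreal (norm (h x - g x)) \<partial>M) < ennreal e)"

lemma continuous_borel_measurable_lebesgue_on:
  "S \<in> sets lebesgue \<Longrightarrow> continuous_on UNIV g \<Longrightarrow> g \<in> borel_measurable (lebesgue_on S)"
  using continuous_imp_measurable_on_sets_lebesgue continuous_on_subset by blast

lemma L1_continuous_approximable_add:
  fixes f1 f2 :: "real \<Rightarrow> 'b::euclidean_space"
  assumes S: "S \<in> sets lebesgue"
    and [measurable]: "f1 \<in> borel_measurable (lebesgue_on S)" "f2 \<in> borel_measurable (lebesgue_on S)"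
    and "L1_continuous_approximable (lebesgue_on S) f1" "L1_continuous_approximable (lebesgue_on S) f2"
  shows "L1_continuous_approximable (lebesgue_on S) (\<lambda>x. f1 x + f2 x)"
  unfolding L1_continuous_approximable_def
proof (intro allI impI)
  fix e :: real assume "e > 0"
  then have e2: "e/2 > 0" by simp
  obtain g1 g2 where g: "continuous_on UNIV g1" "continuous_on UNIV g2"
    and g1: "(\<integral>\<^sup>+x. ennreal (norm (f1 x - g1 x)) \<partial>lebesgue_on S) < ennreal (e/2)"
    and g2: "(\<integral>\<^sup>+x. ennreal (norm (f2 x - g2 x)) \<partial>lebesgue_on S) < ennreal (e/2)"
    using assms(4,5) e2 unfolding L1_continuous_approximable_def by meson
  have [measurable]: "g1 \<in> borel_measurable (lebesgue_on S)" "g2 \<in> borel_measurable (lebesgue_on S)"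
    using g S continuous_borel_measurable_lebesgue_on by blast+
  have "(\<integral>\<^sup>+x. ennreal (norm ((f1 x + f2 x) - (g1 x + g2 x))) \<partial>lebesgue_on S)
     \<le> (\<integral>\<^sup>+x. ennreal (norm (f1 x - g1 x)) + ennreal (norm (f2 x - g2 x)) \<partial>lebesgue_on S)"
  proof (intro nn_integral_mono)
    fix x
    have "norm ((f1 x + f2 x) - (g1 x + g2 x)) \<le> norm (f1 x - g1 x) + norm (f2 x - g2 x)"
      by (metis add_diff_add norm_triangle_ineq)
    then show "ennreal (norm ((f1 x + f2 x) - (g1 x + g2 x)))
        \<le> ennreal (norm (f1 x - g1 x)) + ennreal (norm (f2 x - g2 x))"
      by (simp flip: ennreal_plus)
  qed
  also have "\<dots> = (\<integral>\<^sup>+x. ennreal (norm (f1 x - g1 x)) \<partial>lebesgue_on S)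
      + (\<integral>\<^sup>+x. ennreal (norm (f2 x - g2 x)) \<partial>lebesgue_on S)"
    by (rule nn_integral_add) auto
  also have "\<dots> < ennreal (e/2) + ennreal (e/2)"
    using g1 g2 by (rule add_strict_mono)
  also have "\<dots> = ennreal e" using e2 by (simp flip: ennreal_plus)
  finally show "\<exists>g. continuous_on UNIV g \<and>
      (\<integral>\<^sup>+x. ennreal (norm ((f1 x + f2 x) - g x)) \<partial>lebesgue_on S) < ennreal e"
    using g continuous_on_add by blast
qed

lemma L1_continuous_approximable_limit:
  fixes f :: "real \<Rightarrow> 'b::euclidean_space"
  assumes S: "S \<in> sets lebesgue"
    and [measurable]: "f \<in> borel_measurable (lebesgue_on S)" "\<And>i. s i \<in> borel_measurable (lebesgue_on S)"
    and approx: "\<And>i. L1_continuous_approximable (lebesgue_on S) (s i)"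
    and lim: "(\<lambda>i. \<integral>\<^sup>+x. ennreal (norm (f x - s i x)) \<partial>lebesgue_on S) \<longlonglongrightarrow> 0"
  shows "L1_continuous_approximable (lebesgue_on S) f"
  unfolding L1_continuous_approximable_def
proof (intro allI impI)
  fix e :: real assume "e > 0"
  then have e2: "e/2 > 0" by simp
  then have "eventually (\<lambda>i. (\<integral>\<^sup>+x. ennreal (norm (f x - s i x)) \<partial>lebesgue_on S) < ennreal (e/2)) sequentially"
    by (intro order_tendstoD(2)[OF lim]) auto
  then obtain i where i: "(\<integral>\<^sup>+x. ennreal (norm (f x - s i x)) \<partial>lebesgue_on S) < ennreal (e/2)"
    by (meson eventually_sequentially order_refl)
  obtain g where g: "continuous_on UNIV g"
    and gi: "(\<integral>\<^sup>+x. ennreal (norm (s i x - g x)) \<partial>lebesgue_on S) < ennreal (e/2)"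
    using approx e2 unfolding L1_continuous_approximable_def by blast
  have [measurable]: "g \<in> borel_measurable (lebesgue_on S)"
    using g S continuous_borel_measurable_lebesgue_on by blast
  have "(\<integral>\<^sup>+x. ennreal (norm (f x - g x)) \<partial>lebesgue_on S)
      \<le> (\<integral>\<^sup>+x. ennreal (norm (f x - s i x)) \<partial>lebesgue_on S)
        + (\<integral>\<^sup>+x. ennreal (norm (s i x - g x)) \<partial>lebesgue_on S)"
    by (rule nn_integral_norm_diff_triangle) auto
  also have "\<dots> < ennreal (e/2) + ennreal (e/2)"
    using i gi by (rule add_strict_mono)
  also have "\<dots> = ennreal e" using e2 by (simp flip: ennreal_plus)
  finally show "\<exists>g. continuous_on UNIV g \<and> (\<integral>\<^sup>+x. ennreal (norm (f x - g x)) \<partial>lebesgue_on S) < ennreal e"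
    using g by blast
qed

lemma integrable_imp_L1_continuous_approximable:
  fixes h :: "real \<Rightarrow> 'b::euclidean_space"
  assumes "integrable (lebesgue_on S) h" and S: "S \<in> sets lebesgue"
  shows "L1_continuous_approximable (lebesgue_on S) h"
  using assms(1)
proof (induct rule: integrable_induct)
  case (base A c)
  show ?case
    unfolding L1_continuous_approximable_def
  proof (intro allI impI)
    fix e :: real assume e: "e > 0"
    have "A \<in> sets lebesgue" using base(1) S by (simp add: sets_restrict_space_iff)
    then obtain g where g: "continuous_on UNIV g"
      "(\<integral>\<^sup>+x. ennreal (norm (indicator A x *\<^sub>R c - g x)) \<partial>lebesgue) < ennreal e"
      using continuous_L1_approx_indicator e by blast
    have "(\<integral>\<^sup>+x. ennreal (norm (indicator A x *\<^sub>R c - g x)) \<partial>lebesgue_on S)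
        \<le> (\<integral>\<^sup>+x. ennreal (norm (indicator A x *\<^sub>R c - g x)) \<partial>lebesgue)"
      using S by (simp add: nn_integral_restrict_space nn_integral_mono indicator_def)
    then show "\<exists>g. continuous_on UNIV g \<and>
        (\<integral>\<^sup>+x. ennreal (norm (indicator A x *\<^sub>R c - g x)) \<partial>lebesgue_on S) < ennreal e"
      using g by (meson order.strict_trans1)
  qed
next
  case (add f g)
  then show ?case using S by (intro L1_continuous_approximable_add) auto
next
  case (lim f s)
  have fm: "f \<in> borel_measurable (lebesgue_on S)" using lim(5) by auto
  have sm: "\<And>i. s i \<in> borel_measurable (lebesgue_on S)" using lim(1) by auto
  have "(\<lambda>i. \<integral>\<^sup>+x. ennreal (norm (f x - s i x)) \<partial>lebesgue_on S) \<longlonglongrightarrow> 0"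
  proof (rule nn_integral_dominated_convergence_norm[where w="\<lambda>x. 2 * norm (f x)"])
    show "(\<lambda>x. 2 * norm (f x)) \<in> borel_measurable (lebesgue_on S)" using fm by measurable
    show "\<And>j. AE x in lebesgue_on S. norm (s j x) \<le> 2 * norm (f x)" using lim(4) by auto
    show "AE x in lebesgue_on S. (\<lambda>i. s i x) \<longlonglongrightarrow> f x" using lim(3) by auto
    have "(\<integral>\<^sup>+x. ennreal (norm (f x)) \<partial>lebesgue_on S) < \<infinity>"
      using lim(5) by (simp add: integrable_iff_bounded)
    then show "(\<integral>\<^sup>+x. ennreal (2 * norm (f x)) \<partial>lebesgue_on S) < \<infinity>"
      using fm by (simp add: ennreal_mult nn_integral_cmult ennreal_mult_less_top)
  qed (use fm sm in auto)
  then show ?case by (rule L1_continuous_approximable_limit[OF S fm sm lim(2)])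
qed

section \<open>Approximation by unit-speed curves with continuous curvature\<close>

lemma continuous_L1_approx_interval:
  fixes u :: "real \<Rightarrow> 'a::euclidean_space"
  assumes u: "u absolutely_integrable_on {a..b}" and e: "e > 0"
  obtains g where "continuous_on UNIV g" "(\<lambda>t. norm (u t - g t)) integrable_on {a..b}"
    "integral {a..b} (\<lambda>t. norm (u t - g t)) < e"
proof -
  have S: "{a..b} \<in> sets lebesgue" by simp
  have uL: "integrable (lebesgue_on {a..b}) u"
    using u S by (simp add: set_integrable_def integrable_restrict_space)
  obtain g where g: "continuous_on UNIV g"
    and gL: "(\<integral>\<^sup>+t. ennreal (norm (u t - g t)) \<partial>lebesgue_on {a..b}) < ennreal e"
    using integrable_imp_L1_continuous_approximable[OF uL S] e
    unfolding L1_continuous_approximable_def by blast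
  have "g absolutely_integrable_on {a..b}"
    using g continuous_on_subset absolutely_integrable_continuous_real by blast
  then have gL': "integrable (lebesgue_on {a..b}) g"
    using S by (simp add: set_integrable_def integrable_restrict_space)
  have nL: "integrable (lebesgue_on {a..b}) (\<lambda>t. norm (u t - g t))"
    using uL gL' by auto
  have "(\<integral>\<^sup>+t. ennreal (norm (u t - g t)) \<partial>lebesgue_on {a..b})
      = ennreal (integral {a..b} (\<lambda>t. norm (u t - g t)))"
    using nn_integral_eq_integral[OF nL] lebesgue_integral_eq_integral[OF nL S] by simp
  moreover have "integral {a..b} (\<lambda>t. norm (u t - g t)) \<ge> 0"
    using integrable_on_lebesgue_on[OF nL S] by (intro integral_nonneg) auto
  ultimately have "integral {a..b} (\<lambda>t. norm (u t - g t)) < e"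
    using gL ennreal_less_iff by auto
  then show ?thesis using that g integrable_on_lebesgue_on[OF nL S] by blast
qed

text \<open>In dimension at least two the image of a polynomial path is negligible, so a small translate
  of a polynomial approximation misses the origin.\<close>
lemma polynomial_nonvanishing_uniform_approx:
  fixes g :: "real \<Rightarrow> 'a::euclidean_space"
  assumes dim: "DIM('a) \<ge> 2" and g: "continuous_on {a..b} g" and \<delta>: "\<delta> > 0"
  obtains w w' where "\<And>t. (w has_vector_derivative w' t) (at t)" "continuous_on UNIV w'"
    "\<And>t. w t \<noteq> 0" "\<And>t. t \<in> {a..b} \<Longrightarrow> norm (g t - w t) < \<delta>"
proof -
  have \<delta>2: "\<delta>/2 > 0" using \<delta> by simp
  obtain p where p: "polynomial_function p" "\<And>t. t \<in> {a..b} \<Longrightarrow> norm (g t - p t) < \<delta>/2"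
    using Stone_Weierstrass_polynomial_function[OF compact_Icc g \<delta>2] by blast
  have "negligible (range p)"
    using dim p(1)
    by (intro negligible_differentiable_image_lowdim) (auto intro: differentiable_on_polynomial_function)
  then have "\<not> ball (0::'a) (\<delta>/2) \<subseteq> range p"
    using \<delta>2 open_not_negligible[of "ball (0::'a) (\<delta>/2)"] negligible_subset by auto
  then obtain c where "c \<in> ball 0 (\<delta>/2)" "c \<notin> range p" by blast
  then have c: "norm c < \<delta>/2" "c \<notin> range p" by auto
  obtain p' where p': "polynomial_function p'" "\<And>t. (p has_vector_derivative p' t) (at t)"
    using has_vector_derivative_polynomial_function[OF p(1)] by blast
  show ?thesis
  proof (rule that[of "\<lambda>t. p t - c" p'])
    show "((\<lambda>t. p t - c) has_vector_derivative p' t) (at t)" for t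
      using has_vector_derivative_diff[OF p'(2)[of t] has_vector_derivative_const[of c]] by simp
    show "continuous_on UNIV p'" using p'(1) by (rule continuous_on_polymonial_function)
    show "p t - c \<noteq> 0" for t using c(2) by auto
    show "norm (g t - (p t - c)) < \<delta>" if "t \<in> {a..b}" for t
      using norm_triangle_ineq[of "g t - p t" c] p(2)[OF that] c(1) by (simp add: algebra_simps)
  qed
qed

lemma smooth_nonvanishing_L1_approx:
  fixes u :: "real \<Rightarrow> 'a::euclidean_space"
  assumes dim: "DIM('a) \<ge> 2" and a: "a \<ge> 0" and u: "u absolutely_integrable_on {0..a}"
    and e: "e > 0"
  obtains w w' where "\<And>t. (w has_vector_derivative w' t) (at t)" "continuous_on UNIV w'"
    "\<And>t. w t \<noteq> 0" "(\<lambda>t. norm (u t - w t)) integrable_on {0..a}"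
    "integral {0..a} (\<lambda>t. norm (u t - w t)) < e"
proof -
  obtain g where g: "continuous_on UNIV g" and ugi: "(\<lambda>t. norm (u t - g t)) integrable_on {0..a}"
    and ug: "integral {0..a} (\<lambda>t. norm (u t - g t)) < e/2"
    using continuous_L1_approx_interval[OF u, of "e/2"] e by auto
  define \<delta> where "\<delta> = e / (2 * (a + 1))"
  have \<delta>: "\<delta> > 0" unfolding \<delta>_def using e a by simp
  obtain w w' where w: "\<And>t. (w has_vector_derivative w' t) (at t)" "continuous_on UNIV w'"
      "\<And>t. w t \<noteq> 0" and gw: "\<And>t. t \<in> {0..a} \<Longrightarrow> norm (g t - w t) < \<delta>"
    using polynomial_nonvanishing_uniform_approx[OF dim continuous_on_subset[OF g] \<delta>] by blast
  have "continuous_on {0..a} w"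
    using w(1) by (meson continuous_at_imp_continuous_on has_vector_derivative_continuous)
  then have "w absolutely_integrable_on {0..a}" by (rule absolutely_integrable_continuous_real)
  then have uwi: "(\<lambda>t. norm (u t - w t)) integrable_on {0..a}"
    using absolutely_integrable_norm[OF set_integral_diff(1)[OF u]]
    by (simp add: absolutely_integrable_on_def)
  have "integral {0..a} (\<lambda>t. norm (u t - w t)) \<le> integral {0..a} (\<lambda>t. norm (u t - g t) + \<delta>)"
  proof (rule integral_le[OF uwi])
    show "(\<lambda>t. norm (u t - g t) + \<delta>) integrable_on {0..a}" using ugi by (intro integrable_add) auto
    show "norm (u t - w t) \<le> norm (u t - g t) + \<delta>" if "t \<in> {0..a}" for t
      using gw[OF that] by (intro norm_diff_triangle_le[OF order_refl]) simp
  qed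
  also have "\<dots> = integral {0..a} (\<lambda>t. norm (u t - g t)) + \<delta> * a"
    using integral_add[OF ugi integrable_const_ivl[of \<delta> 0 a]] a by (simp add: mult.commute)
  also have "\<delta> * a \<le> e/2"
    unfolding \<delta>_def using a e by (simp add: field_simps)
  finally show ?thesis using that w uwi ug by fastforce
qed

lemma has_vector_derivative_normalize:
  fixes w :: "real \<Rightarrow> 'a::euclidean_space"
  assumes wd: "(w has_vector_derivative w' t) (at t)" and nz: "w t \<noteq> 0"
  shows "((\<lambda>s. inverse (norm (w s)) *\<^sub>R w s) has_vector_derivative
     (inverse (norm (w t)) *\<^sub>R w' t - ((w t \<bullet> w' t) / (norm (w t)) ^ 3) *\<^sub>R w t)) (at t)"
proof -
  have "(norm has_derivative (\<lambda>h. sgn (w t) \<bullet> h)) (at (w t))"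
    using has_derivative_norm[OF nz] by (simp add: inner_commute)
  then have "((\<lambda>s. norm (w s)) has_derivative (\<lambda>h. sgn (w t) \<bullet> (h *\<^sub>R w' t))) (at t)"
    using has_derivative_compose[OF wd[unfolded has_vector_derivative_def]] by blast
  then have "((\<lambda>s. norm (w s)) has_real_derivative ((w t \<bullet> w' t) / norm (w t))) (at t)"
    unfolding has_field_derivative_def
    by (rule has_derivative_eq_rhs) (auto simp: sgn_div_norm inner_commute field_simps)
  from DERIV_inverse_fun[OF this] nz
  have "((\<lambda>s. inverse (norm (w s))) has_real_derivative - ((w t \<bullet> w' t) / (norm (w t)) ^ 3)) (at t)"
    by (simp add: power2_eq_square power3_eq_cube field_simps)
  from has_vector_derivative_scaleR[OF this wd] show ?thesis
    by (simp add: algebra_simps)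
qed

lemma integral_has_vector_derivative_from_0:
  fixes v :: "real \<Rightarrow> 'a::euclidean_space"
  assumes "continuous_on UNIV v" "t \<in> {0..b}"
  shows "((\<lambda>s. f0 + integral {0..s} v) has_vector_derivative v t) (at t within {0..b})"
  using has_vector_derivative_add[OF has_vector_derivative_const
      integral_has_vector_derivative[OF continuous_on_subset[OF assms(1)] assms(2)]]
  by auto

lemma unit_speed_integral_in_curves_C:
  fixes v :: "real \<Rightarrow> 'a::euclidean_space"
  assumes a: "a \<ge> 0" and vc: "continuous_on UNIV v" and nv: "\<And>t. norm (v t) = 1"
  shows "(a, \<lambda>s. f0 + integral {0..s} v) \<in> curves_C"
proof -
  let ?\<psi> = "\<lambda>s. f0 + integral {0..s} v"
  have "1-lipschitz_on {0..a} ?\<psi>"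
  proof (rule bounded_derivative_imp_lipschitz[where f'="\<lambda>t h. h *\<^sub>R v t"])
    show "(?\<psi> has_derivative (\<lambda>h. h *\<^sub>R v t)) (at t within {0..a})" if "t \<in> {0..a}" for t
      using integral_has_vector_derivative_from_0[OF vc that] by (simp add: has_vector_derivative_def)
    show "onorm (\<lambda>h. h *\<^sub>R v t) \<le> 1" for t using nv[of t] by (simp add: onorm_scaleR_left onorm_id)
  qed auto
  moreover have "(?\<psi> has_vector_derivative v t) (at t)" if "t > 0" for t
  proof -
    have "at t within {0..t + 1} = at t" using that by (intro at_within_interior) auto
    then show ?thesis using integral_has_vector_derivative_from_0[OF vc, of t "t + 1" f0] that by simp
  qed
  ultimately show ?thesis unfolding curves_C_def using a nv by (auto intro!: AE_I2)
qed

lemma integral_curve_in_H2: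
  fixes v \<kappa> :: "real \<Rightarrow> 'a::euclidean_space"
  assumes vc: "continuous_on UNIV v" and vd: "\<And>t. (v has_vector_derivative \<kappa> t) (at t)"
    and \<kappa>c: "continuous_on UNIV \<kappa>"
  shows "in_H2 (a, \<lambda>s. f0 + integral {0..s} v)"
  unfolding in_H2_def
proof (intro exI)
  have si: "set_integrable lborel {0..t} \<kappa>" for t
    by (rule borel_integrable_atLeastAtMost') (use \<kappa>c continuous_on_subset in blast)
  show "is_curvature (a, \<lambda>s. f0 + integral {0..s} v) \<kappa>"
    unfolding is_curvature_def fst_conv snd_conv
  proof (intro conjI si exI[of _ v] ballI)
    show "set_integrable lborel {0..a} (\<lambda>t. (norm (\<kappa> t))\<^sup>2)"
      by (rule borel_integrable_atLeastAtMost') (intro continuous_intros, use \<kappa>c continuous_on_subset in blast)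
    fix t assume t: "t \<in> {0..a}"
    show "((\<lambda>s. f0 + integral {0..s} v) has_vector_derivative v t) (at t within {0..a})"
      by (rule integral_has_vector_derivative_from_0[OF vc t])
    have "(\<kappa> has_integral (v t - v 0)) {0..t}"
      using t by (intro fundamental_theorem_of_calculus) (auto intro: vd has_vector_derivative_at_within)
    then show "v t = v 0 + (LINT s:{0..t}|lborel. \<kappa> s)"
      using set_borel_integral_eq_integral(2)[OF si] by (simp add: integral_unique)
  qed
qed

lemma curves_C_derivative_integral:
  fixes f :: "real \<Rightarrow> 'a::euclidean_space"
  assumes C: "(a, f) \<in> curves_C"
  obtains u where "\<And>t. norm (u t) \<le> 1" "\<And>t. t \<in> {0..a} \<Longrightarrow> (u has_integral (f t - f 0)) {0..t}"
    "negligible {t \<in> {0..a}. norm (u t) \<noteq> 1}"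
proof -
  obtain M where lip: "M-lipschitz_on {0..a} f"
    and ae: "AE t in lborel. t \<in> {0<..<a} \<longrightarrow> (\<exists>v. (f has_vector_derivative v) (at t) \<and> norm v = 1)"
    using C unfolding curves_C_def by auto
  define D where "D t v \<longleftrightarrow> (f has_vector_derivative v) (at t) \<and> norm v = 1" for t v
  define u where "u t = (if \<exists>v. D t v then SOME v. D t v else 0)" for t
  have uD: "D t (u t)" if "\<exists>v. D t v" for t
    using that someI_ex[OF that] unfolding u_def by simp
  have ub: "norm (u t) \<le> 1" for t
    using uD[of t] by (cases "\<exists>v. D t v") (auto simp: u_def D_def)
  obtain N where N: "{t \<in> space lborel. \<not> (t \<in> {0<..<a} \<longrightarrow> (\<exists>v. D t v))} \<subseteq> N"
      "emeasure lborel N = 0" "N \<in> sets lborel"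
    using ae unfolding D_def[symmetric] by (rule AE_E)
  have negN: "negligible N"
    using N(2,3) by (simp add: negligible_iff_null_sets null_sets_completionI null_setsI)
  have good: "D t (u t)" if "t \<in> {0<..<a} - N" for t
    using N(1) that uD by auto
  show ?thesis
  proof (rule that[OF ub])
    fix t assume t: "t \<in> {0..a}"
    show "(u has_integral (f t - f 0)) {0..t}"
    proof (cases "t = 0")
      case False
      then have "0 < t" using t by auto
      moreover have "M-lipschitz_on {0..t} f" using lip by (rule lipschitz_on_subset) (use t in auto)
      ultimately show ?thesis
        using good t by (intro lipschitz_has_integral_derivative[OF _ _ negN _ ub]) (auto simp: D_def)
    qed (use has_integral_refl(2)[of u 0] in simp)
  next
    have "{t \<in> {0..a}. norm (u t) \<noteq> 1} \<subseteq> N \<union> {0, a}"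
    proof
      fix t assume t: "t \<in> {t \<in> {0..a}. norm (u t) \<noteq> 1}"
      then have "t \<notin> {0<..<a} - N" using good unfolding D_def by blast
      with t show "t \<in> N \<union> {0, a}" by auto
    qed
    moreover have "negligible (N \<union> {0, a})" using negN by simp
    ultimately show "negligible {t \<in> {0..a}. norm (u t) \<noteq> 1}"
      using negligible_subset by blast
  qed
qed

lemma norm_normalize_diff_le:
  fixes u w :: "'a::real_normed_vector"
  assumes "w \<noteq> 0" "norm u \<le> 1"
  shows "norm (inverse (norm w) *\<^sub>R w - u) \<le> 2 * norm (u - w) + (1 - norm u)"
proof -
  have "inverse (norm w) *\<^sub>R w - w = (inverse (norm w) - 1) *\<^sub>R w" by (simp add: algebra_simps)
  then have "norm (inverse (norm w) *\<^sub>R w - w) = \<bar>1 - norm w\<bar>"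
    using assms(1) by (simp add: field_simps abs_minus_commute)
  also have "\<dots> \<le> (1 - norm u) + norm (u - w)"
    using assms(2) norm_triangle_ineq3[of u w] by linarith
  moreover have "norm (inverse (norm w) *\<^sub>R w - u)
      \<le> norm (inverse (norm w) *\<^sub>R w - w) + norm (w - u)"
    by (rule norm_diff_triangle_le) auto
  ultimately show ?thesis by (simp add: norm_minus_commute)
qed

text \<open>Approximate the unit tangent in L^1 by a smooth nonvanishing field and integrate its
  normalisation: this keeps unit speed and the length, and the curvature is continuous.\<close>
lemma curves_C_H2_uniform_approx:
  fixes f :: "real \<Rightarrow> 'a::euclidean_space"
  assumes dim: "DIM('a) \<ge> 2" and C: "(a, f) \<in> curves_C" and \<delta>: "\<delta> > 0"
  obtains \<psi> where "(a, \<psi>) \<in> curves_C" "in_H2 (a, \<psi>)" "\<And>s. s \<in> {0..a} \<Longrightarrow> norm (\<psi> s - f s) \<le> \<delta>"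
proof -
  have a: "a \<ge> 0" using C unfolding curves_C_def by auto
  obtain u where ub: "\<And>t. norm (u t) \<le> 1"
    and uint: "\<And>t. t \<in> {0..a} \<Longrightarrow> (u has_integral (f t - f 0)) {0..t}"
    and uneg: "negligible {t \<in> {0..a}. norm (u t) \<noteq> 1}"
    using curves_C_derivative_integral[OF C] by blast
  have ui: "u integrable_on {0..a}" using uint[of a] a by auto
  have uabs: "u absolutely_integrable_on {0..a}"
    by (rule absolutely_integrable_integrable_bound[where g="\<lambda>_. 1"]) (use ub ui in auto)
  obtain w w' where wd: "\<And>t. (w has_vector_derivative w' t) (at t)" and w'c: "continuous_on UNIV w'"
    and nz: "\<And>t. w t \<noteq> 0" and ni: "(\<lambda>t. norm (u t - w t)) integrable_on {0..a}"
    and nI: "integral {0..a} (\<lambda>t. norm (u t - w t)) < \<delta>/2"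
    using smooth_nonvanishing_L1_approx[OF dim a uabs, of "\<delta>/2"] \<delta> by auto
  define v where "v = (\<lambda>t. inverse (norm (w t)) *\<^sub>R w t)"
  define \<kappa> where "\<kappa> = (\<lambda>t. inverse (norm (w t)) *\<^sub>R w' t - ((w t \<bullet> w' t) / (norm (w t)) ^ 3) *\<^sub>R w t)"
  have wc: "continuous_on UNIV w"
    using wd by (meson continuous_at_imp_continuous_on has_vector_derivative_continuous)
  have vc: "continuous_on UNIV v" unfolding v_def by (intro continuous_intros wc) (auto simp: nz)
  have \<kappa>c: "continuous_on UNIV \<kappa>" unfolding \<kappa>_def by (intro continuous_intros wc w'c) (auto simp: nz)
  have vd: "(v has_vector_derivative \<kappa> t) (at t)" for t
    unfolding v_def \<kappa>_def by (rule has_vector_derivative_normalize[OF wd nz])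
  define \<psi> where "\<psi> = (\<lambda>s. f 0 + integral {0..s} v)"
  have C\<psi>: "(a, \<psi>) \<in> curves_C"
    unfolding \<psi>_def using unit_speed_integral_in_curves_C[OF a vc] nz by (simp add: v_def)
  have H\<psi>: "in_H2 (a, \<psi>)"
    unfolding \<psi>_def by (rule integral_curve_in_H2[OF vc vd \<kappa>c])
  define g where "g = (\<lambda>t. 2 * norm (u t - w t) + (1 - norm (u t)))"
  have nui: "(\<lambda>t. norm (u t)) integrable_on {0..a}"
    using uabs by (simp add: absolutely_integrable_on_def)
  have gi: "g integrable_on {0..a}" unfolding g_def
    using ni nui by (intro integrable_add integrable_diff integrable_cmul integrable_on_const) auto
  have g0: "g t \<ge> 0" for t unfolding g_def using ub[of t] by simp
  have vu: "norm (v t - u t) \<le> g t" for t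
    unfolding v_def g_def by (rule norm_normalize_diff_le[OF nz ub])
  have "integral {0..a} g = 2 * integral {0..a} (\<lambda>t. norm (u t - w t)) + integral {0..a} (\<lambda>t. 1 - norm (u t))"
    using ni nui unfolding g_def
    by (simp add: integral_add integral_diff integrable_diff integrable_on_const)
  also have "integral {0..a} (\<lambda>t. 1 - norm (u t)) = integral {0..a} (\<lambda>t. 0)"
    by (rule integral_spike[OF uneg]) auto
  finally have Ig: "integral {0..a} g < \<delta>" using nI by simp
  show ?thesis
  proof (rule that[OF C\<psi> H\<psi>])
    fix s assume s: "s \<in> {0..a}"
    have vi: "v integrable_on {0..s}" using vc continuous_on_subset integrable_continuous_interval by blast
    have "\<psi> s - f s = integral {0..s} (\<lambda>t. v t - u t)"
      unfolding \<psi>_def using integral_diff[OF vi has_integral_integrable[OF uint[OF s]]] integral_unique[OF uint[OF s]]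
      by (simp add: algebra_simps)
    also have "norm \<dots> \<le> integral {0..s} g"
      using integrable_diff[OF vi has_integral_integrable[OF uint[OF s]]] integrable_on_subinterval[OF gi, of 0 s] s vu
      by (auto intro!: integral_norm_bound_integral)
    also have "\<dots> \<le> integral {0..a} g"
      using integrable_on_subinterval[OF gi, of 0 s] gi s g0 by (intro integral_subset_le) auto
    finally show "norm (\<psi> s - f s) \<le> \<delta>" using Ig by simp
  qed
qed

section \<open>The metric on curves\<close>

lemma curves_C_length_nonneg: "(a, f) \<in> curves_C \<Longrightarrow> a \<ge> 0"
  unfolding curves_C_def by auto

lemma curves_C_bounded:
  assumes "(a, f) \<in> curves_C"
  obtains B where "\<And>s. s \<in> {0..a} \<Longrightarrow> norm (f s) \<le> B"
proof -
  obtain M where "M-lipschitz_on {0..a} f" using assms unfolding curves_C_def by auto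
  then have "compact (f ` {0..a})"
    by (intro compact_continuous_image lipschitz_on_continuous_on) auto
  then show ?thesis using that compact_imp_bounded by (fastforce simp: bounded_iff)
qed

lemma image_rescale_unit_interval:
  fixes a :: real
  assumes a: "a \<ge> 0"
  shows "(\<lambda>t. f (t * a)) ` {0..1} = f ` {0..a}" "(\<lambda>t. f (a - t * a)) ` {0..1} = f ` {0..a}"
proof -
  have "(\<lambda>t. t * a) ` {0..1} = {0..a}"
  proof (intro equalityI subsetI)
    fix x assume "x \<in> {0..a}"
    show "x \<in> (\<lambda>t. t * a) ` {0..1}"
    proof (cases "a = 0")
      case False
      then show ?thesis using \<open>x \<in> {0..a}\<close> a by (intro image_eqI[of _ _ "x / a"]) auto
    qed (use \<open>x \<in> {0..a}\<close> in \<open>auto intro: image_eqI[of _ _ 0]\<close>)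
  qed (use a in \<open>auto simp: mult_left_le_one_le\<close>)
  moreover have "(\<lambda>t. a - t * a) ` {0..1} = {0..a}"
  proof (intro equalityI subsetI)
    fix x assume "x \<in> {0..a}"
    show "x \<in> (\<lambda>t. a - t * a) ` {0..1}"
    proof (cases "a = 0")
      case False
      then show ?thesis
        using \<open>x \<in> {0..a}\<close> a by (intro image_eqI[of _ _ "(a - x) / a"]) (auto simp: field_simps)
    qed (use \<open>x \<in> {0..a}\<close> in \<open>auto intro: image_eqI[of _ _ 0]\<close>)
  qed (use a in \<open>auto simp: mult_left_le_one_le\<close>)
  ultimately show "(\<lambda>t. f (t * a)) ` {0..1} = f ` {0..a}" "(\<lambda>t. f (a - t * a)) ` {0..1} = f ` {0..a}"
    by (metis image_image)+
qed

lemma infdist_image_le: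
  assumes "T \<noteq> {}" and "\<And>t. t \<in> T \<Longrightarrow> dist (g t) (h t) \<le> d"
  shows "infdist x (g ` T) \<le> infdist x (h ` T) + d"
proof -
  have "infdist x (g ` T) - d \<le> dist x (h t)" if "t \<in> T" for t
  proof -
    have "infdist x (g ` T) \<le> dist x (g t)" using that by (intro infdist_le) auto
    also have "\<dots> \<le> dist x (h t) + dist (g t) (h t)" by (metis dist_commute dist_triangle)
    finally show ?thesis using assms(2)[OF that] by simp
  qed
  then have "infdist x (g ` T) - d \<le> infdist x (h ` T)"
    using assms(1) unfolding infdist_def by (auto intro!: cINF_greatest)
  then show ?thesis by simp
qed

lemma abs_infdist_image_diff_le_Sup:
  assumes "T \<noteq> {}" and bdd: "bdd_above ((\<lambda>t. dist (g t) (h t)) ` T)"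
  shows "\<bar>infdist x (g ` T) - infdist x (h ` T)\<bar> \<le> Sup ((\<lambda>t. dist (g t) (h t)) ` T)"
proof -
  have le: "dist (g t) (h t) \<le> Sup ((\<lambda>t. dist (g t) (h t)) ` T)" if "t \<in> T" for t
    using bdd that by (intro cSup_upper) auto
  show ?thesis
    using infdist_image_le[OF assms(1), of g h _ x] infdist_image_le[OF assms(1), of h g _ x] le
    by (smt (verit) dist_commute)
qed

text \<open>The parametrisations at constant speed over [0,1] realise the images of both curves, so
  the uniform distance of the parametrisations bounds the Hausdorff distance of the images.\<close>
lemma curve_dist_bounds:
  fixes \<phi> \<psi> :: "'a::euclidean_space curve"
  assumes C1: "\<phi> \<in> curves_C" and C2: "\<psi> \<in> curves_C"
  shows "\<bar>infdist x (curve_image \<phi>) - infdist x (curve_image \<psi>)\<bar> \<le> curve_dist \<phi> \<psi>"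
    and "\<bar>curve_len \<phi> - curve_len \<psi>\<bar> \<le> curve_dist \<phi> \<psi>"
proof -
  obtain a1 f1 a2 f2 where \<phi>: "\<phi> = (a1, f1)" and \<psi>: "\<psi> = (a2, f2)" by fastforce
  have a: "a1 \<ge> 0" "a2 \<ge> 0" using C1 C2 curves_C_length_nonneg unfolding \<phi> \<psi> by blast+
  obtain B1 B2 where B: "\<And>s. s \<in> {0..a1} \<Longrightarrow> norm (f1 s) \<le> B1" "\<And>s. s \<in> {0..a2} \<Longrightarrow> norm (f2 s) \<le> B2"
    using curves_C_bounded C1 C2 unfolding \<phi> \<psi> by metis
  have mem: "t * a \<in> {0..a}" "a - t * a \<in> {0..a}" if "t \<in> {0..1}" "a \<ge> 0" for t a :: real
    using that by (auto simp: mult_left_le_one_le)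
  define g1 where "g1 = (\<lambda>t. f1 (t * a1))"
  define g2 where "g2 = (\<lambda>t. f1 (a1 - t * a1))"
  define h where "h = (\<lambda>t. f2 (t * a2))"
  define S1 where "S1 = Sup ((\<lambda>t. dist (g1 t) (h t)) ` {0..1})"
  define S2 where "S2 = Sup ((\<lambda>t. dist (g2 t) (h t)) ` {0..1})"
  have bdd: "bdd_above ((\<lambda>t. dist (g t) (h t)) ` {0..1})"
    if "\<And>t. t \<in> {0..1} \<Longrightarrow> norm (g t) \<le> B1" for g
    using that B(2)[OF mem(1)[OF _ a(2)]] unfolding h_def dist_norm
    by (intro bdd_aboveI2[where M="B1 + B2"]) (smt (verit) norm_triangle_ineq4)
  have bdd1: "bdd_above ((\<lambda>t. dist (g1 t) (h t)) ` {0..1})"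
    using B(1)[OF mem(1)[OF _ a(1)]] unfolding g1_def by (intro bdd) auto
  have bdd2: "bdd_above ((\<lambda>t. dist (g2 t) (h t)) ` {0..1})"
    using B(1)[OF mem(2)[OF _ a(1)]] unfolding g2_def by (intro bdd) auto
  have S: "S1 \<ge> 0" "S2 \<ge> 0"
    unfolding S1_def S2_def using bdd1 bdd2
    by (auto intro!: cSup_upper2[where x="dist _ _"] imageI[of 0] zero_le_dist)
  have cd: "curve_dist \<phi> \<psi> = min S1 S2 + \<bar>a1 - a2\<bar>"
    unfolding curve_dist_def S1_def S2_def g1_def g2_def h_def \<phi> \<psi> by (simp add: dist_norm)
  have img: "curve_image \<phi> = g1 ` {0..1}" "curve_image \<phi> = g2 ` {0..1}" "curve_image \<psi> = h ` {0..1}"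
    unfolding curve_image_def g1_def g2_def h_def \<phi> \<psi> using a by (simp_all add: image_rescale_unit_interval)
  have "\<bar>infdist x (g1 ` {0..1}) - infdist x (h ` {0..1})\<bar> \<le> S1"
    unfolding S1_def by (rule abs_infdist_image_diff_le_Sup[OF _ bdd1]) simp
  moreover have "\<bar>infdist x (g2 ` {0..1}) - infdist x (h ` {0..1})\<bar> \<le> S2"
    unfolding S2_def by (rule abs_infdist_image_diff_le_Sup[OF _ bdd2]) simp
  ultimately show "\<bar>infdist x (curve_image \<phi>) - infdist x (curve_image \<psi>)\<bar> \<le> curve_dist \<phi> \<psi>"
    unfolding cd img(3) using img(1,2) by (smt (verit))
  show "\<bar>curve_len \<phi> - curve_len \<psi>\<bar> \<le> curve_dist \<phi> \<psi>"
    using S unfolding cd by (simp add: curve_len_def \<phi> \<psi>)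
qed

lemma curve_dist_same_length_le:
  fixes g f :: "real \<Rightarrow> 'a::real_normed_vector"
  assumes "\<And>s. s \<in> {0..a} \<Longrightarrow> norm (g s - f s) \<le> \<delta>" "a \<ge> 0"
  shows "curve_dist (a, g) (a, f) \<le> \<delta>"
proof -
  have "Sup ((\<lambda>t. norm (g (t * a) - f (t * a))) ` {0..1}) \<le> \<delta>"
    using assms by (intro cSup_least) (auto simp: mult_left_le_one_le)
  then show ?thesis unfolding curve_dist_def by (simp add: min_le_iff_disj)
qed

lemma curve_dist_tendsto:
  fixes \<phi>s :: "nat \<Rightarrow> 'a::euclidean_space curve"
  assumes "\<And>n. \<phi>s n \<in> curves_C" "\<phi> \<in> curves_C" "(\<lambda>n. curve_dist (\<phi>s n) \<phi>) \<longlonglongrightarrow> 0"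
  shows "(\<lambda>n. infdist x (curve_image (\<phi>s n))) \<longlonglongrightarrow> infdist x (curve_image \<phi>)"
    and "(\<lambda>n. curve_len (\<phi>s n)) \<longlonglongrightarrow> curve_len \<phi>"
  using Lim_null_comparison[OF _ assms(3), of "\<lambda>n. infdist x (curve_image (\<phi>s n)) - infdist x (curve_image \<phi>)"]
    Lim_null_comparison[OF _ assms(3), of "\<lambda>n. curve_len (\<phi>s n) - curve_len \<phi>"]
    curve_dist_bounds[OF assms(1,2)]
  by (auto simp: LIM_zero_iff)

section \<open>Gamma-convergence\<close>

lemma mono_enn2ereal: "mono enn2ereal"
  by (rule monoI) (simp add: less_eq_ennreal.rep_eq)

lemma liminf_enn2ereal: "liminf (\<lambda>n. enn2ereal (f n)) = enn2ereal (liminf f)"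
  by (rule Liminf_compose_continuous_mono[OF continuous_on_enn2ereal mono_enn2ereal]) simp

lemma limsup_enn2ereal: "limsup (\<lambda>n. enn2ereal (f n)) = enn2ereal (limsup f)"
  by (rule Limsup_compose_continuous_mono[OF continuous_on_enn2ereal mono_enn2ereal]) simp

lemma ennreal_liminf_add_le:
  fixes f g :: "nat \<Rightarrow> ennreal"
  shows "liminf f + liminf g \<le> liminf (\<lambda>n. f n + g n)"
proof -
  have "liminf (\<lambda>n. enn2ereal (f n)) + liminf (\<lambda>n. enn2ereal (g n))
      \<le> liminf (\<lambda>n. enn2ereal (f n) + enn2ereal (g n))"
    by (rule Liminf_add_le) auto
  then show ?thesis
    by (simp add: liminf_enn2ereal less_eq_ennreal.rep_eq plus_ennreal.rep_eq flip: liminf_enn2ereal)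
qed

lemma ennreal_limsup_add_le:
  fixes f g :: "nat \<Rightarrow> ennreal"
  shows "limsup (\<lambda>n. f n + g n) \<le> limsup f + limsup g"
proof -
  have "limsup (\<lambda>n. enn2ereal (f n) + enn2ereal (g n))
      \<le> limsup (\<lambda>n. enn2ereal (f n)) + limsup (\<lambda>n. enn2ereal (g n))"
    by (rule ereal_limsup_add_mono)
  then show ?thesis
    by (simp add: limsup_enn2ereal less_eq_ennreal.rep_eq plus_ennreal.rep_eq flip: limsup_enn2ereal)
qed

text \<open>A diagonal argument: index j is admitted at time n only once the error for j has dropped
  below 1/(j+1).\<close>
lemma tendsto_zero_slow_reindex:
  fixes \<epsilon> E :: "nat \<Rightarrow> real"
  assumes eps: "\<epsilon> \<longlonglongrightarrow> 0"
  obtains \<kappa> :: "nat \<Rightarrow> nat" where "filterlim \<kappa> at_top sequentially" "(\<lambda>n. \<epsilon> n * E (\<kappa> n)) \<longlonglongrightarrow> 0"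
proof -
  have "\<exists>N. \<forall>n\<ge>N. \<bar>\<epsilon> n * E j\<bar> < 1 / (real j + 1)" for j
    using LIMSEQ_D[OF tendsto_mult_left_zero[OF eps, of "E j"], of "1 / (real j + 1)"] by auto
  then obtain N where N: "\<And>j n. n \<ge> N j \<Longrightarrow> \<bar>\<epsilon> n * E j\<bar> < 1 / (real j + 1)" by metis
  define J where "J n = {j. j \<le> n \<and> N j \<le> n}" for n
  define \<kappa> where "\<kappa> n = (if J n = {} then 0 else Max (J n))" for n
  have fin: "finite (J n)" for n unfolding J_def by simp
  have \<kappa>N: "N (\<kappa> n) \<le> n" if "n \<ge> N 0" for n
  proof -
    have "J n \<noteq> {}" using that unfolding J_def by auto
    then have "\<kappa> n \<in> J n" unfolding \<kappa>_def using Max_in[OF fin] by simp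
    then show ?thesis unfolding J_def by simp
  qed
  have \<kappa>ge: "\<kappa> n \<ge> j" if "n \<ge> j" "n \<ge> N j" for n j
  proof -
    have "j \<in> J n" using that unfolding J_def by simp
    then show ?thesis unfolding \<kappa>_def using Max_ge[OF fin] by auto
  qed
  have "filterlim \<kappa> at_top sequentially"
    unfolding filterlim_at_top eventually_sequentially
    using \<kappa>ge by (intro allI exI[of _ "max _ (N _)"]) auto
  moreover have "(\<lambda>n. \<epsilon> n * E (\<kappa> n)) \<longlonglongrightarrow> 0"
  proof (rule LIMSEQ_I)
    fix r :: real assume r: "r > 0"
    obtain j :: nat where j: "1 / (real j + 1) < r"
      using reals_Archimedean[OF r] by (auto simp: inverse_eq_divide add.commute)
    have "norm (\<epsilon> n * E (\<kappa> n) - 0) < r" if n: "n \<ge> max (N 0) (max j (N j))" for n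
    proof -
      have "\<bar>\<epsilon> n * E (\<kappa> n)\<bar> < 1 / (real (\<kappa> n) + 1)" using N \<kappa>N n by simp
      also have "\<dots> \<le> 1 / (real j + 1)" using \<kappa>ge[of j n] n by (simp add: frac_le)
      finally show ?thesis using j by simp
    qed
    then show "\<exists>no. \<forall>n\<ge>no. norm (\<epsilon> n * E (\<kappa> n) - 0) < r" by blast
  qed
  ultimately show ?thesis using that by blast
qed

lemma borel_measurable_infdist_powr:
  fixes \<mu> :: "'a::euclidean_space measure"
  assumes "sets \<mu> = sets borel" "p > 0"
  shows "(\<lambda>x. ennreal (infdist x S powr p)) \<in> borel_measurable \<mu>"
proof -
  have "continuous_on UNIV (\<lambda>x. infdist x S powr p)"
    by (rule continuous_on_powr') (use assms(2) in \<open>auto intro: continuous_intros simp: infdist_nonneg\<close>)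
  then have "(\<lambda>x. ennreal (infdist x S powr p)) \<in> borel_measurable borel"
    by (intro borel_measurable_continuous_onI continuous_on_ennreal)
  then show ?thesis using measurable_cong_sets[OF assms(1) refl] by blast
qed

lemma E_fun_le_Eps_fun: "E_fun \<mu> lam p c \<le> Eps_fun \<mu> lam \<epsilon> p c"
  unfolding E_fun_def Eps_fun_def by auto

lemma Eps_fun_eq_E_fun:
  "c \<in> curves_C \<Longrightarrow> in_H2 c \<Longrightarrow>
    Eps_fun \<mu> lam \<epsilon> p c = E_fun \<mu> lam p c + ennreal (\<epsilon> * curvature_energy c)"
  unfolding E_fun_def Eps_fun_def by simp

lemma E_fun_le_liminf_Eps_fun:
  fixes \<mu> :: "'a::euclidean_space measure"
  assumes "sets \<mu> = sets borel" "p > 0"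
    and Cs: "\<And>n. \<phi>s n \<in> curves_C" and C: "\<phi> \<in> curves_C"
    and d: "(\<lambda>n. curve_dist (\<phi>s n) \<phi>) \<longlonglongrightarrow> 0"
  shows "E_fun \<mu> lam p \<phi> \<le> liminf (\<lambda>n. Eps_fun \<mu> lam (\<epsilon> n) p (\<phi>s n))"
proof -
  let ?I = "\<lambda>c. \<integral>\<^sup>+ x. ennreal (infdist x (curve_image c) powr p) \<partial>\<mu>"
  let ?L = "\<lambda>c. ennreal (lam * curve_len c)"
  have conv: "(\<lambda>n. ennreal (infdist x (curve_image (\<phi>s n)) powr p)) \<longlonglongrightarrow> ennreal (infdist x (curve_image \<phi>) powr p)" for x
    using curve_dist_tendsto(1)[OF Cs C d] assms(2)
    by (intro tendsto_ennrealI tendsto_powr2 tendsto_const) (auto simp: infdist_nonneg)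
  then have "?I \<phi> = (\<integral>\<^sup>+ x. liminf (\<lambda>n. ennreal (infdist x (curve_image (\<phi>s n)) powr p)) \<partial>\<mu>)"
    using lim_imp_Liminf[OF trivial_limit_sequentially conv] by simp
  also have "\<dots> \<le> liminf (\<lambda>n. ?I (\<phi>s n))"
    by (intro nn_integral_liminf borel_measurable_infdist_powr assms(1,2))
  finally have I: "?I \<phi> \<le> liminf (\<lambda>n. ?I (\<phi>s n))" .
  have "(\<lambda>n. ?L (\<phi>s n)) \<longlonglongrightarrow> ?L \<phi>"
    by (intro tendsto_ennrealI tendsto_mult_left curve_dist_tendsto(2)[OF Cs C d])
  from lim_imp_Liminf[OF trivial_limit_sequentially this]
  have L: "?L \<phi> = liminf (\<lambda>n. ?L (\<phi>s n))" by simp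
  have "E_fun \<mu> lam p \<phi> \<le> liminf (\<lambda>n. ?I (\<phi>s n)) + liminf (\<lambda>n. ?L (\<phi>s n))"
    unfolding E_fun_def L using I by (rule add_right_mono)
  also have "\<dots> \<le> liminf (\<lambda>n. E_fun \<mu> lam p (\<phi>s n))"
    unfolding E_fun_def by (rule ennreal_liminf_add_le)
  also have "\<dots> \<le> liminf (\<lambda>n. Eps_fun \<mu> lam (\<epsilon> n) p (\<phi>s n))"
    by (intro Liminf_mono always_eventually allI E_fun_le_Eps_fun)
  finally show ?thesis .
qed

text \<open>Reverse Fatou: on the compact support the distances to the images are uniformly bounded.\<close>
lemma limsup_nn_integral_infdist_le:
  fixes \<mu> :: "'a::euclidean_space measure"
  assumes sets: "sets \<mu> = sets borel" and fin: "finite_measure \<mu>"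
    and K: "compact K" "emeasure \<mu> (space \<mu> - K) = 0" and p: "p > 0"
    and Cs: "\<And>n. \<phi>s n \<in> curves_C" and C: "\<phi> \<in> curves_C"
    and d: "(\<lambda>n. curve_dist (\<phi>s n) \<phi>) \<longlonglongrightarrow> 0"
  shows "limsup (\<lambda>n. \<integral>\<^sup>+ x. ennreal (infdist x (curve_image (\<phi>s n)) powr p) \<partial>\<mu>)
      \<le> (\<integral>\<^sup>+ x. ennreal (infdist x (curve_image \<phi>) powr p) \<partial>\<mu>)"
proof -
  obtain D where "\<And>n. norm (curve_dist (\<phi>s n) \<phi>) \<le> D"
    using BseqE[OF convergent_imp_Bseq[OF convergentI[OF d]]] by blast
  then have D: "curve_dist (\<phi>s n) \<phi> \<le> D" for n by (simp add: abs_le_D1)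
  obtain RK where RK: "\<And>x. x \<in> K \<Longrightarrow> norm x \<le> RK"
    using compact_imp_bounded[OF K(1)] by (auto simp: bounded_iff)
  obtain a f where \<phi>: "\<phi> = (a, f)" by fastforce
  have "a \<ge> 0" using curves_C_length_nonneg C unfolding \<phi> by blast
  then have f0: "f 0 \<in> curve_image \<phi>" unfolding \<phi> curve_image_def by simp
  define R where "R = RK + norm (f 0) + D"
  have dom: "ennreal (infdist x (curve_image (\<phi>s n)) powr p) \<le> ennreal (R powr p)" if x: "x \<in> K" for x n
  proof -
    have "infdist x (curve_image (\<phi>s n)) \<le> infdist x (curve_image \<phi>) + D"
      using curve_dist_bounds(1)[OF Cs[of n] C, of x] D[of n] by linarith
    also have "infdist x (curve_image \<phi>) \<le> norm x + norm (f 0)"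
      using infdist_le[OF f0, of x] by (simp add: dist_norm norm_triangle_ineq4 order_trans)
    finally have "infdist x (curve_image (\<phi>s n)) \<le> R" unfolding R_def using RK[OF x] by linarith
    then show ?thesis using p by (intro ennreal_leI powr_mono2) (auto simp: infdist_nonneg)
  qed
  have "K \<in> sets borel" using K(1) by (simp add: borel_compact)
  then have "space borel - K \<in> sets borel" by (rule sets.compl_sets)
  then have "space \<mu> - K \<in> sets \<mu>" using sets sets_eq_imp_space_eq[OF sets] by simp
  then have aeK: "AE x in \<mu>. x \<in> K"
    using K(2) by (intro AE_I'[of "space \<mu> - K"]) auto
  have conv: "(\<lambda>n. ennreal (infdist x (curve_image (\<phi>s n)) powr p)) \<longlonglongrightarrow> ennreal (infdist x (curve_image \<phi>) powr p)" for x
    using curve_dist_tendsto(1)[OF Cs C d] p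
    by (intro tendsto_ennrealI tendsto_powr2 tendsto_const) (auto simp: infdist_nonneg)
  then have "(\<integral>\<^sup>+ x. ennreal (infdist x (curve_image \<phi>) powr p) \<partial>\<mu>)
      = (\<integral>\<^sup>+ x. limsup (\<lambda>n. ennreal (infdist x (curve_image (\<phi>s n)) powr p)) \<partial>\<mu>)"
    using lim_imp_Limsup[OF trivial_limit_sequentially conv] by simp
  moreover have "limsup (\<lambda>n. \<integral>\<^sup>+ x. ennreal (infdist x (curve_image (\<phi>s n)) powr p) \<partial>\<mu>)
      \<le> (\<integral>\<^sup>+ x. limsup (\<lambda>n. ennreal (infdist x (curve_image (\<phi>s n)) powr p)) \<partial>\<mu>)"
  proof (rule nn_integral_limsup[where w="\<lambda>_. ennreal (R powr p)"])
    show "AE x in \<mu>. ennreal (infdist x (curve_image (\<phi>s i)) powr p) \<le> ennreal (R powr p)" for i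
      using aeK by (rule eventually_mono) (rule dom)
    show "(\<integral>\<^sup>+x. ennreal (R powr p) \<partial>\<mu>) < \<infinity>"
      using finite_measure.emeasure_finite[OF fin]
      by (simp add: ennreal_mult_less_top top.not_eq_extremum)
  qed (use borel_measurable_infdist_powr[OF sets p] in auto)
  ultimately show ?thesis by simp
qed

lemma Eps_fun_recovery_sequence:
  fixes \<mu> :: "'a::euclidean_space measure" and \<epsilon> :: "nat \<Rightarrow> real"
  assumes dim: "DIM('a) \<ge> 2" and sets: "sets \<mu> = sets borel" and fin: "finite_measure \<mu>"
    and K: "compact K" "emeasure \<mu> (space \<mu> - K) = 0" and p: "p > 0"
    and eps: "\<epsilon> \<longlonglongrightarrow> 0" and C: "\<phi> \<in> curves_C"
  obtains \<phi>s where "\<And>n. \<phi>s n \<in> curves_C" "(\<lambda>n. curve_dist (\<phi>s n) \<phi>) \<longlonglongrightarrow> 0"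
    "limsup (\<lambda>n. Eps_fun \<mu> lam (\<epsilon> n) p (\<phi>s n)) \<le> E_fun \<mu> lam p \<phi>"
proof -
  obtain a f where \<phi>: "\<phi> = (a, f)" by fastforce
  have Caf: "(a, f) \<in> curves_C" using C \<phi> by simp
  have "\<exists>\<psi>. (a, \<psi>) \<in> curves_C \<and> in_H2 (a, \<psi>) \<and> (\<forall>s\<in>{0..a}. norm (\<psi> s - f s) \<le> 1 / (real k + 1))" for k
  proof -
    have "1 / (real k + 1) > 0" by simp
    then show ?thesis by (rule curves_C_H2_uniform_approx[OF dim Caf]) blast
  qed
  then have "\<forall>k. \<exists>\<psi>. (a, \<psi>) \<in> curves_C \<and> in_H2 (a, \<psi>) \<and> (\<forall>s\<in>{0..a}. norm (\<psi> s - f s) \<le> 1 / (real k + 1))"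
    by blast
  from choice[OF this] obtain \<Psi> where \<Psi>: "\<forall>k. (a, \<Psi> k) \<in> curves_C \<and> in_H2 (a, \<Psi> k) \<and>
      (\<forall>s\<in>{0..a}. norm (\<Psi> k s - f s) \<le> 1 / (real k + 1))"
    by blast
  have \<Psi>C: "\<And>k. (a, \<Psi> k) \<in> curves_C" and \<Psi>H: "\<And>k. in_H2 (a, \<Psi> k)"
    and \<Psi>d: "\<And>k s. s \<in> {0..a} \<Longrightarrow> norm (\<Psi> k s - f s) \<le> 1 / (real k + 1)"
    using \<Psi> by blast+
  obtain \<kappa> where \<kappa>: "filterlim \<kappa> at_top sequentially"
    and \<kappa>e: "(\<lambda>n. \<epsilon> n * curvature_energy (a, \<Psi> (\<kappa> n))) \<longlonglongrightarrow> 0"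
    using tendsto_zero_slow_reindex[OF eps, where E="\<lambda>k. curvature_energy (a, \<Psi> k)"] by blast
  define \<phi>s where "\<phi>s n = (a, \<Psi> (\<kappa> n))" for n
  have Cs: "\<phi>s n \<in> curves_C" and Hs: "in_H2 (\<phi>s n)" for n unfolding \<phi>s_def using \<Psi>C \<Psi>H by simp_all
  have dge: "0 \<le> curve_dist (\<phi>s n) \<phi>" for n
    using curve_dist_bounds(2)[OF Cs C] abs_ge_zero order_trans by blast
  have dle: "curve_dist (\<phi>s n) \<phi> \<le> 1 / (real (\<kappa> n) + 1)" for n
    unfolding \<phi>s_def \<phi> by (rule curve_dist_same_length_le[OF \<Psi>d curves_C_length_nonneg[OF Caf]])
  have lim0: "(\<lambda>n. 1 / (real (\<kappa> n) + 1)) \<longlonglongrightarrow> 0"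
    using filterlim_compose[OF LIMSEQ_inverse_real_of_nat \<kappa>] by (simp add: inverse_eq_divide add.commute)
  have d: "(\<lambda>n. curve_dist (\<phi>s n) \<phi>) \<longlonglongrightarrow> 0"
    by (rule tendsto_sandwich[OF _ _ tendsto_const lim0]) (use dge dle in auto)
  let ?I = "\<lambda>n. \<integral>\<^sup>+ x. ennreal (infdist x (curve_image (\<phi>s n)) powr p) \<partial>\<mu>"
  let ?L = "ennreal (lam * curve_len \<phi>)"
  let ?R = "\<lambda>n. ennreal (\<epsilon> n * curvature_energy (a, \<Psi> (\<kappa> n)))"
  have "Eps_fun \<mu> lam (\<epsilon> n) p (\<phi>s n) = (?I n + ?L) + ?R n" for n
    using Eps_fun_eq_E_fun[OF Cs Hs] unfolding E_fun_def \<phi>s_def \<phi> curve_len_def by simp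
  then have "limsup (\<lambda>n. Eps_fun \<mu> lam (\<epsilon> n) p (\<phi>s n)) \<le> limsup (\<lambda>n. ?I n + ?L) + limsup ?R"
    using ennreal_limsup_add_le[of "\<lambda>n. ?I n + ?L" ?R] by presburger
  also have "limsup ?R = 0"
    using lim_imp_Limsup[OF trivial_limit_sequentially tendsto_ennrealI[OF \<kappa>e]] by simp
  also have "limsup (\<lambda>n. ?I n + ?L) \<le> limsup ?I + ?L"
    using ennreal_limsup_add_le[of ?I "\<lambda>_. ?L"] by (simp add: Limsup_const)
  also have "\<dots> \<le> E_fun \<mu> lam p \<phi>"
    unfolding E_fun_def using limsup_nn_integral_infdist_le[OF sets fin K p Cs C d] by (rule add_right_mono)
  finally show ?thesis using that[of \<phi>s] Cs d by simp
qed

theorem lemma2p6: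
  fixes \<mu> :: "'a::euclidean_space measure" and lam p :: real and \<epsilon> :: "nat \<Rightarrow> real"
  assumes "DIM('a) \<ge> 2"
    and "sets \<mu> = sets borel" and "finite_measure \<mu>"
    and "\<exists>K. compact K \<and> emeasure \<mu> (space \<mu> - K) = 0"
    and "lam > 0" and "p \<ge> 1"
    and "\<forall>n. \<epsilon> n > 0" and "\<epsilon> \<longlonglongrightarrow> 0"
  shows "(\<forall>\<phi>s \<phi>. (\<forall>n. \<phi>s n \<in> curves_C) \<longrightarrow> \<phi> \<in> curves_C \<longrightarrow>
            (\<lambda>n. curve_dist (\<phi>s n) \<phi>) \<longlonglongrightarrow> 0 \<longrightarrow>
            liminf (\<lambda>n. Eps_fun \<mu> lam (\<epsilon> n) p (\<phi>s n)) \<ge> E_fun \<mu> lam p \<phi>)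
       \<and> (\<forall>\<phi>\<in>curves_C. \<exists>\<phi>s. (\<forall>n. \<phi>s n \<in> curves_C) \<and>
            (\<lambda>n. curve_dist (\<phi>s n) \<phi>) \<longlonglongrightarrow> 0 \<and>
            limsup (\<lambda>n. Eps_fun \<mu> lam (\<epsilon> n) p (\<phi>s n)) \<le> E_fun \<mu> lam p \<phi>)"
proof -
  obtain K where K: "compact K" "emeasure \<mu> (space \<mu> - K) = 0" using assms(4) by blast
  have p: "p > 0" using assms(6) by simp
  show ?thesis
  proof (intro conjI allI impI ballI)
    fix \<phi>s :: "nat \<Rightarrow> 'a curve" and \<phi> :: "'a curve"
    assume "\<forall>n. \<phi>s n \<in> curves_C" "\<phi> \<in> curves_C" "(\<lambda>n. curve_dist (\<phi>s n) \<phi>) \<longlonglongrightarrow> 0"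
    then show "E_fun \<mu> lam p \<phi> \<le> liminf (\<lambda>n. Eps_fun \<mu> lam (\<epsilon> n) p (\<phi>s n))"
      using E_fun_le_liminf_Eps_fun[OF assms(2) p] by blast
  next
    fix \<phi> :: "'a curve" assume "\<phi> \<in> curves_C"
    then show "\<exists>\<phi>s. (\<forall>n. \<phi>s n \<in> curves_C) \<and> (\<lambda>n. curve_dist (\<phi>s n) \<phi>) \<longlonglongrightarrow> 0 \<and>
        limsup (\<lambda>n. Eps_fun \<mu> lam (\<epsilon> n) p (\<phi>s n)) \<le> E_fun \<mu> lam p \<phi>"
      by (rule Eps_fun_recovery_sequence[OF assms(1-3) K p assms(8)]) blast
  qed
qed

end
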